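(* Let $n\ge1$ and let $A_1,\dots,A_n$ be events in a probability space. Then for every $m\in\{0,1,\dots,n-1\}$, \[ \Pr\Big(\bigcup_{i=1}^n A_i\Big) \ge \frac{1}{n-m}\Bigg(\sum_{k=1}^m (-1)^{k-1}\frac{\binom mk}{\binom nk}\cdot\frac{nk-(m+1)(k-1)}{m-k+1}\sum_{1\le i_1<\dots<i_k\le n}\Pr(A_{i_1}\cap\dots\cap A_{i_k}) + (-1)^m\frac{m+1}{\binom nm}\sum_{1\le i_1<\dots<i_{m+1}\le n}\Pr(A_{i_1}\cap\dots\cap A_{i_{m+1}})\Bigg). \]
   Context: An empty sum (e.g. the first sum when $m=0$) equals $0$. *)

theory Defs
  imports "HOL-Probability.Probability"
begin

end

theory Submission
  imports Defs
begin

(*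
  The proof is by counting.  If a point lies in exactly j of the events, it
  contributes (j choose k) to the integrand whose expectation is S_k.  Hence any
  inequality  sum_k c_k * (j choose k) <= [j >= 1]  valid for all 0 <= j <= n
  integrates to  sum_k c_k * S_k <= P(union)  (lemma union_lower_bound_by_counting,
  proved for arbitrary finite measures and index sets).

  The paper's coefficients are rewritten as the weights
     union_weight n M k = (-1)^(k-1) C(n-k, M-k) ((n-M) k + M) / (M C(n,M)),
  with M = m + 1.  Two alternating binomial convolutions evaluate the counting
  polynomial sum_k union_weight n M k * (j choose k) in closed form, from which
  it is at most n - M + 1 = n - m for 1 <= j <= n.  Dividing by n - m gives the
  pointwise inequality, and the corollary follows.
*)

(* Inclusion-exclusion count of the M-subsets of an n-set that avoid a fixed
   j-subset: sum_k (-1)^k C(j,k) C(n-k,M-k) = C(n-j,M). *)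
lemma alternating_binomial_convolution:
  assumes "j \<le> n" "M \<le> n"
  shows "(\<Sum>k\<le>M. (-1)^k * of_nat (j choose k) * of_nat ((n-k) choose (M-k)))
         = (of_nat ((n-j) choose M) :: 'a::comm_ring_1)"
  using assms
proof (induction j arbitrary: n M)
  case 0
  have "(\<Sum>k\<le>M. (-1)^k * of_nat (0 choose k) * of_nat ((n-k) choose (M-k)))
      = (\<Sum>k\<le>M. if k = 0 then (of_nat (n choose M) :: 'a) else 0)"
    by (rule sum.cong) (auto simp: binomial_eq_0)
  then show ?case by simp
next
  case (Suc j)
  show ?case
  proof (cases M)
    case 0
    then show ?thesis by simp
  next
    case (Suc M')
    obtain n' where n: "n = Suc n'" using Suc.prems by (cases n) auto
    have le: "j \<le> Suc n'" "Suc M' \<le> Suc n'" "j \<le> n'" "M' \<le> n'"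
      using Suc.prems n \<open>M = Suc M'\<close> by auto
    define g :: "nat \<Rightarrow> 'a" where "g k = of_nat ((Suc n' - k) choose (Suc M' - k))" for k
    have pascal: "(of_nat (Suc j choose k) :: 'a)
        = of_nat (j choose k) + (if k = 0 then 0 else of_nat (j choose (k - 1)))" for k
      by (cases k) auto
    have "(\<Sum>k\<le>Suc M'. (-1)^k * of_nat (Suc j choose k) * g k)
        = (\<Sum>k\<le>Suc M'. (-1)^k * of_nat (j choose k) * g k)
          + (\<Sum>k\<le>Suc M'. (-1)^k * (if k = 0 then 0 else of_nat (j choose (k - 1))) * g k)"
      unfolding pascal by (simp add: algebra_simps sum.distrib)
    also have "(\<Sum>k\<le>Suc M'. (-1)^k * of_nat (j choose k) * g k) = of_nat ((Suc n' - j) choose Suc M')"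
      using Suc.IH[OF le(1,2)] by (simp add: g_def)
    also have "(\<Sum>k\<le>Suc M'. (-1)^k * (if k = 0 then 0 else of_nat (j choose (k - 1))) * g k)
        = - (\<Sum>l\<le>M'. (-1)^l * of_nat (j choose l) * of_nat ((n' - l) choose (M' - l)))"
      by (subst sum.atMost_Suc_shift) (simp add: g_def sum_negf[symmetric])
    also have "\<dots> = - of_nat ((n' - j) choose M')"
      using Suc.IH[OF le(3,4)] by simp
    also have "of_nat ((Suc n' - j) choose Suc M') + - of_nat ((n' - j) choose M')
        = (of_nat ((n' - j) choose Suc M') :: 'a)"
      using le(3) by (simp add: Suc_diff_le)
    finally show ?thesis using n \<open>M = Suc M'\<close> by (simp add: g_def)
  qed
qed

(* The same convolution weighted by k; it reduces to the previous one via
   k C(j,k) = j C(j-1,k-1). *)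
lemma weighted_alternating_binomial_convolution:
  assumes "1 \<le> j" "j \<le> n" "1 \<le> M" "M \<le> n"
  shows "(\<Sum>k=1..M. (-1)^(k-1) * of_nat k * of_nat (j choose k) * of_nat ((n-k) choose (M-k)))
         = (of_nat j * of_nat ((n-j) choose (M-1)) :: 'a::comm_ring_1)"
proof -
  obtain j' n' M' where e: "j = Suc j'" "n = Suc n'" "M = Suc M'"
    using assms by (metis Suc_le_D One_nat_def)
  have le: "j' \<le> n'" "M' \<le> n'" using assms e by auto
  have "(\<Sum>k=1..M. (-1)^(k-1) * of_nat k * of_nat (j choose k) * of_nat ((n-k) choose (M-k)))
      = (\<Sum>l\<le>M'. (-1)^l * of_nat (Suc l * (Suc j' choose Suc l)) * (of_nat ((n'-l) choose (M'-l)) :: 'a))"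
    unfolding e One_nat_def sum.shift_bounds_cl_Suc_ivl atLeast0AtMost[symmetric]
    by (simp add: algebra_simps)
  also have "\<dots> = of_nat j * (\<Sum>l\<le>M'. (-1)^l * of_nat (j' choose l) * of_nat ((n'-l) choose (M'-l)))"
    unfolding Suc_times_binomial e by (simp add: sum_distrib_left algebra_simps)
  also have "\<dots> = of_nat j * of_nat ((n-j) choose (M-1))"
    using e by (simp add: alternating_binomial_convolution[OF le])
  finally show ?thesis .
qed

(* The weight of S_k in the bound with top index M = m + 1: it is the
   paper's coefficient of S_k before the common factor 1/(n - m). *)
definition union_weight :: "nat \<Rightarrow> nat \<Rightarrow> nat \<Rightarrow> real" where
  "union_weight n M k = (-1)^(k-1) * real ((n-k) choose (M-k)) * ((real n - real M) * real k + real M)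
                        / (real M * real (n choose M))"

(* For k <= m the paper's coefficient of S_k equals union_weight n (m+1) k;
   the key step is C(m,k) (m+1) C(n,m+1) = C(n-k,m+1-k) C(n,k) (m+1-k). *)
lemma union_weight_eq_coefficient:
  assumes "1 \<le> k" "k \<le> m" "m < n"
  shows "(-1)^(k-1) * (real (m choose k) / real (n choose k)) *
           ((real n * real k - (real m + 1) * (real k - 1)) / (real m - real k + 1))
         = union_weight n (Suc m) k"
proof -
  have "(m choose k) * (Suc m * (n choose Suc m)) = (Suc m - k) * (Suc m choose k) * (n choose Suc m)"
    using binomial_absorb_comp[of "Suc m" k] by (simp add: algebra_simps)
  also have "\<dots> = (Suc m - k) * ((n choose Suc m) * (Suc m choose k))"
    by (simp only: mult_ac)
  also have "\<dots> = (Suc m - k) * ((n choose k) * ((n-k) choose (Suc m - k)))"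
    using assms by (simp only: choose_mult)
  finally have "real (m choose k) * (real (Suc m) * real (n choose Suc m))
      = real (Suc m - k) * (real (n choose k) * real ((n-k) choose (Suc m - k)))"
    by (metis of_nat_mult)
  also have "real (Suc m - k) = real m - real k + 1"
    using assms by (simp add: of_nat_diff)
  finally have ratio: "real (m choose k) / (real (n choose k) * (real m - real k + 1))
      = real ((n-k) choose (Suc m - k)) / (real (Suc m) * real (n choose Suc m))"
    using assms by (subst frac_eq_eq) (auto simp: mult_ac)
  have numerator: "real n * real k - (real m + 1) * (real k - 1) = (real n - real (Suc m)) * real k + real (Suc m)"
    by (simp add: algebra_simps)
  have "(-1)^(k-1) * (real (m choose k) / real (n choose k)) *
           ((real n * real k - (real m + 1) * (real k - 1)) / (real m - real k + 1))
      = (-1)^(k-1) * ((real n - real (Suc m)) * real k + real (Suc m))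
          * (real (m choose k) / (real (n choose k) * (real m - real k + 1)))"
    unfolding numerator by (simp add: ac_simps)
  also have "\<dots> = union_weight n (Suc m) k"
    unfolding ratio union_weight_def by (simp add: ac_simps)
  finally show ?thesis .
qed

(* The paper's coefficient of S_(m+1) is union_weight n (m+1) (m+1),
   using (m+1) C(n,m+1) = (n-m) C(n,m). *)
lemma union_weight_eq_top_coefficient:
  assumes "m < n"
  shows "(-1)^m * ((real m + 1) / real (n choose m)) = union_weight n (Suc m) (Suc m)"
proof -
  have "Suc m * (n choose Suc m) = (n - m) * (n choose m)"
    using binomial_absorption[of m n] binomial_absorb_comp[of n m] by simp
  then have denominator: "real (Suc m) * real (n choose Suc m) = (real n - real m) * real (n choose m)"
    using assms by (metis of_nat_mult of_nat_diff less_imp_le)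
  have "union_weight n (Suc m) (Suc m)
      = (-1)^m * ((real n - real m) * real (Suc m)) / (real (Suc m) * real (n choose Suc m))"
    by (simp add: union_weight_def algebra_simps)
  also have "\<dots> = (-1)^m * ((real m + 1) / real (n choose m))"
    unfolding denominator using assms by simp
  finally show ?thesis ..
qed

lemma union_weight_polynomial:
  assumes "1 \<le> j" "j \<le> n" "1 \<le> M" "M \<le> n"
  shows "(\<Sum>k=1..M. union_weight n M k * real (j choose k))
       = (real M * (real (n choose M) - real ((n-j) choose M))
          + (real n - real M) * real j * real ((n-j) choose (M-1))) / (real M * real (n choose M))"
proof -
  let ?a = "\<lambda>k. (-1::real)^(k-1) * real (j choose k) * real ((n-k) choose (M-k))"
  have inclusion_exclusion: "(\<Sum>k=1..M. ?a k) = real (n choose M) - real ((n-j) choose M)"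
  proof -
    have "(\<Sum>k\<le>M. (-1)^k * real (j choose k) * real ((n-k) choose (M-k)))
        = real (n choose M) + (\<Sum>k=1..M. (-1)^k * real (j choose k) * real ((n-k) choose (M-k)))"
      by (simp add: atMost_atLeast0 sum.atLeast_Suc_atMost)
    also have "(\<Sum>k=1..M. (-1)^k * real (j choose k) * real ((n-k) choose (M-k))) = - (\<Sum>k=1..M. ?a k)"
      unfolding sum_negf[symmetric] by (rule sum.cong) (auto simp: power_eq_if)
    finally show ?thesis
      using alternating_binomial_convolution[OF assms(2,4), where 'a=real] by simp
  qed
  have "(\<Sum>k=1..M. union_weight n M k * real (j choose k))
      = (\<Sum>k=1..M. real M * ?a k + (real n - real M) * (real k * ?a k)) / (real M * real (n choose M))"
    unfolding union_weight_def sum_divide_distrib by (rule sum.cong) (simp_all add: algebra_simps)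
  also have "\<dots> = (real M * (\<Sum>k=1..M. ?a k) + (real n - real M) * (\<Sum>k=1..M. real k * ?a k))
        / (real M * real (n choose M))"
    by (simp add: sum.distrib sum_distrib_left)
  also have "(\<Sum>k=1..M. real k * ?a k) = real j * real ((n-j) choose (M-1))"
    using weighted_alternating_binomial_convolution[OF assms, where 'a=real]
    by (simp add: algebra_simps)
  finally show ?thesis unfolding inclusion_exclusion by (simp only: mult.assoc)
qed

(* The counting polynomial is at most n - M + 1 at every 1 <= j <= n, since
   C(n-j,M) >= 0 and j C(n-j,M-1) <= n C(n-1,M-1) = M C(n,M). *)
lemma union_weight_polynomial_le:
  assumes "1 \<le> j" "j \<le> n" "1 \<le> M" "M \<le> n"
  shows "(\<Sum>k=1..M. union_weight n M k * real (j choose k)) \<le> real n - real M + 1"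
proof -
  define C where "C = real (n choose M)"
  have C_pos: "real M * C > 0" using assms by (simp add: C_def)
  have "j * ((n-j) choose (M-1)) \<le> n * ((n-1) choose (M-1))"
    using assms by (intro mult_le_mono binomial_right_mono) auto
  also have "\<dots> = M * (n choose M)" using times_binomial_minus1_eq[of M n] assms by simp
  finally have "real j * real ((n-j) choose (M-1)) \<le> real M * C"
    unfolding C_def by (metis of_nat_le_iff of_nat_mult)
  then have "(real n - real M) * real j * real ((n-j) choose (M-1)) \<le> (real n - real M) * (real M * C)"
    using assms by (subst mult.assoc) (intro mult_left_mono, auto)
  with add_mono[of "real M * (C - real ((n-j) choose M))" "real M * C"]
  have "real M * (C - real ((n-j) choose M)) + (real n - real M) * real j * real ((n-j) choose (M-1))
      \<le> real M * C + (real n - real M) * (real M * C)"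
    by (simp add: right_diff_distrib)
  also have "\<dots> = (real n - real M + 1) * (real M * C)"
    by (simp add: algebra_simps)
  finally have "real M * (C - real ((n-j) choose M)) + (real n - real M) * real j * real ((n-j) choose (M-1))
      \<le> (real n - real M + 1) * (real M * C)" .
  with C_pos show ?thesis
    unfolding union_weight_polynomial[OF assms] by (simp add: C_def pos_divide_le_eq)
qed

lemma sum_subsets_indicator_Inter:
  assumes "finite I"
  shows "(\<Sum>S\<in>{S. S \<subseteq> I \<and> card S = k}. indicator (\<Inter>i\<in>S. A i) x :: real)
       = real (card {i\<in>I. x \<in> A i} choose k)"
proof -
  define J where "J = {i\<in>I. x \<in> A i}"
  have "finite {S. S \<subseteq> I \<and> card S = k}"
    by (rule finite_subset[of _ "Pow I"]) (use assms in auto)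
  moreover have "(\<Sum>S\<in>{S. S \<subseteq> I \<and> card S = k}. indicator (\<Inter>i\<in>S. A i) x :: real)
      = (\<Sum>S\<in>{S. S \<subseteq> I \<and> card S = k}. if S \<subseteq> J then 1 else 0)"
    by (rule sum.cong) (auto simp: indicator_def J_def)
  ultimately have "(\<Sum>S\<in>{S. S \<subseteq> I \<and> card S = k}. indicator (\<Inter>i\<in>S. A i) x :: real)
      = real (card {S\<in>{S. S \<subseteq> I \<and> card S = k}. S \<subseteq> J})"
    by (simp add: sum.If_cases Int_def)
  also have "{S\<in>{S. S \<subseteq> I \<and> card S = k}. S \<subseteq> J} = {S. S \<subseteq> J \<and> card S = k}"
    by (auto simp: J_def)
  also have "card \<dots> = card J choose k"
    using assms by (intro n_subsets) (simp add: J_def)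
  finally show ?thesis by (simp add: J_def)
qed

lemma (in finite_measure) sum_subsets_measure_Inter:
  assumes "finite I" "\<And>i. i \<in> I \<Longrightarrow> A i \<in> sets M" "1 \<le> k"
  shows "integrable M (\<lambda>x. real (card {i\<in>I. x \<in> A i} choose k))"
    and "(\<Sum>S\<in>{S. S \<subseteq> I \<and> card S = k}. measure M (\<Inter>i\<in>S. A i))
         = (\<integral>x. real (card {i\<in>I. x \<in> A i} choose k) \<partial>M)"
proof -
  let ?K = "{S. S \<subseteq> I \<and> card S = k}"
  have events: "(\<Inter>i\<in>S. A i) \<in> sets M" if "S \<in> ?K" for S
  proof -
    have "finite S" "S \<noteq> {}" "S \<subseteq> I"
      using that assms by (auto intro: finite_subset)
    then show ?thesis using assms(2) by (intro sets.finite_INT) auto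
  qed
  have integrable_indicators: "integrable M (indicator (\<Inter>i\<in>S. A i) :: 'a \<Rightarrow> real)" if "S \<in> ?K" for S
    using events[OF that] by (rule integrable_real_indicator) (simp add: less_top[symmetric])
  have count: "(\<lambda>x. real (card {i\<in>I. x \<in> A i} choose k))
      = (\<lambda>x. \<Sum>S\<in>?K. indicator (\<Inter>i\<in>S. A i) x)"
    by (rule ext, rule sum_subsets_indicator_Inter[OF assms(1), symmetric])
  show "integrable M (\<lambda>x. real (card {i\<in>I. x \<in> A i} choose k))"
    unfolding count using integrable_indicators by (rule Bochner_Integration.integrable_sum)
  show "(\<Sum>S\<in>?K. measure M (\<Inter>i\<in>S. A i)) = (\<integral>x. real (card {i\<in>I. x \<in> A i} choose k) \<partial>M)"
    unfolding count using events integrable_indicators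
    by (subst Bochner_Integration.integral_sum) (auto simp: Int_absorb2 sets.sets_into_space)
qed

(* Bonferroni-type inequalities by counting: if sum_k c_k C(j,k) <= 1 for all
   1 <= j <= |I| (the case j = 0 is automatic since 0 is not in K), then
   sum_k c_k S_k is a lower bound for the measure of the union. *)
lemma (in finite_measure) union_lower_bound_by_counting:
  assumes "finite I" "\<And>i. i \<in> I \<Longrightarrow> A i \<in> sets M" "finite K" "0 \<notin> K"
    and bound: "\<And>j. 1 \<le> j \<Longrightarrow> j \<le> card I \<Longrightarrow> (\<Sum>k\<in>K. c k * real (j choose k)) \<le> 1"
  shows "(\<Sum>k\<in>K. c k * (\<Sum>S\<in>{S. S \<subseteq> I \<and> card S = k}. measure M (\<Inter>i\<in>S. A i)))
         \<le> measure M (\<Union>i\<in>I. A i)"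
proof -
  define N where "N x = card {i\<in>I. x \<in> A i}" for x
  have union_event: "(\<Union>i\<in>I. A i) \<in> sets M" using assms(1,2) by auto
  have pos: "1 \<le> k" if "k \<in> K" for k using that assms(4) by (cases k) auto
  have integrable_count: "integrable M (\<lambda>x. real (N x choose k))" if "k \<in> K" for k
    unfolding N_def using assms(1,2) pos[OF that] by (rule sum_subsets_measure_Inter(1))
  have expectation: "(\<Sum>S\<in>{S. S \<subseteq> I \<and> card S = k}. measure M (\<Inter>i\<in>S. A i))
      = (\<integral>x. real (N x choose k) \<partial>M)" if "k \<in> K" for k
    unfolding N_def using assms(1,2) pos[OF that] by (rule sum_subsets_measure_Inter(2))
  have pointwise: "(\<Sum>k\<in>K. c k * real (N x choose k)) \<le> indicator (\<Union>i\<in>I. A i) x" for x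
  proof (cases "N x = 0")
    case True
    then have "(\<Sum>k\<in>K. c k * real (N x choose k)) = 0"
      using pos by (intro sum.neutral) (auto simp: binomial_eq_0)
    then show ?thesis by simp
  next
    case False
    then have "{i\<in>I. x \<in> A i} \<noteq> {}" unfolding N_def by (metis card.empty)
    then have "x \<in> (\<Union>i\<in>I. A i)" by auto
    moreover have "N x \<le> card I" unfolding N_def using assms(1) by (intro card_mono) auto
    ultimately show ?thesis using bound False by simp
  qed
  have "(\<Sum>k\<in>K. c k * (\<Sum>S\<in>{S. S \<subseteq> I \<and> card S = k}. measure M (\<Inter>i\<in>S. A i)))
      = (\<integral>x. (\<Sum>k\<in>K. c k * real (N x choose k)) \<partial>M)"
    using integrable_count expectation by (subst Bochner_Integration.integral_sum) auto
  also have "\<dots> \<le> (\<integral>x. indicator (\<Union>i\<in>I. A i) x \<partial>M)"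
    using integrable_count union_event pointwise
    by (intro integral_mono) (auto intro!: integrable_real_indicator simp: less_top[symmetric])
  also have "\<dots> = measure M (\<Union>i\<in>I. A i)"
    using union_event by (simp add: Int_absorb2 sets.sets_into_space)
  finally show ?thesis .
qed

theorem corollary5:
  fixes M :: "'a measure" and A :: "nat \<Rightarrow> 'a set" and n m :: nat
  assumes "prob_space M"
    and "n \<ge> 1"
    and "\<And>i. i \<in> {1..n} \<Longrightarrow> A i \<in> sets M"
    and "m < n"
  shows "measure M (\<Union>i\<in>{1..n}. A i) \<ge>
    (1 / (real n - real m)) *
    ((\<Sum>k=1..m. (-1) ^ (k - 1) * (real (m choose k) / real (n choose k)) *
        ((real n * real k - (real m + 1) * (real k - 1)) / (real m - real k + 1)) *
        (\<Sum>S\<in>{S. S \<subseteq> {1..n} \<and> card S = k}. measure M (\<Inter>i\<in>S. A i)))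
     + (-1) ^ m * ((real m + 1) / real (n choose m)) *
        (\<Sum>S\<in>{S. S \<subseteq> {1..n} \<and> card S = m + 1}. measure M (\<Inter>i\<in>S. A i)))"
proof -
  interpret prob_space M by fact
  define w where "w = union_weight n (Suc m)"
  define P where "P k = (\<Sum>S\<in>{S. S \<subseteq> {1..n} \<and> card S = k}. measure M (\<Inter>i\<in>S. A i))" for k
  have "(1 / (real n - real m)) *
    ((\<Sum>k=1..m. (-1) ^ (k - 1) * (real (m choose k) / real (n choose k)) *
        ((real n * real k - (real m + 1) * (real k - 1)) / (real m - real k + 1)) * P k)
     + (-1) ^ m * ((real m + 1) / real (n choose m)) * P (m + 1))
    = (1 / (real n - real m)) * ((\<Sum>k=1..m. w k * P k) + w (Suc m) * P (Suc m))"
    using union_weight_eq_coefficient[OF _ _ assms(4)] union_weight_eq_top_coefficient[OF assms(4)]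
    by (simp add: w_def)
  also have "\<dots> = (\<Sum>k\<in>{1..Suc m}. w k / (real n - real m) * P k)"
    by (simp add: sum_divide_distrib add_divide_distrib)
  also have "\<dots> \<le> measure M (\<Union>i\<in>{1..n}. A i)"
    unfolding P_def
  proof (rule union_lower_bound_by_counting)
    fix j assume "1 \<le> j" "j \<le> card {1..n}"
    then have "(\<Sum>k=1..Suc m. w k * real (j choose k)) \<le> real n - real m"
      using union_weight_polynomial_le[of j n "Suc m"] assms(4) by (simp add: w_def)
    then show "(\<Sum>k\<in>{1..Suc m}. w k / (real n - real m) * real (j choose k)) \<le> 1"
      using assms(4) by (simp add: sum_divide_distrib[symmetric] divide_le_eq_1)
  qed (use assms(3) in auto)
  finally show ?thesis unfolding P_def .
qed

end
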